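(* Let $m,n,a,b$ be positive integers with $a<m$, $b<n$, and let $A$ be the $m\times n$ array whose empty cells are exactly those in $I_1\times I_2$, where $I_1=[m-a+1,m]$ and $I_2$ is either $[1,b]$ or $[n-b+1,n]$. If $\gcd(m,n)=a+b$ and $\gcd(a,b)=1$, then the bishop is a solution to $T(A)$.
   Context: Arrays are toroidal (row indices mod $m$, column indices mod $n$); $F(A)$ is the set of filled cells. $s_R(i,j)=(i,j+t)$, $s_C(i,j)=(i+t,j)$ with $t\ge1$ minimal such that the cell is filled. The bishop's move is $s_C\circ s_R$. A move function is a solution to $T(A)$ if it is a permutation of $F(A)$ forming a single cycle of length $|F(A)|$. *)

theory Defs
  imports Main
begin

text \<open>Cells of an m x n toroidal array are indexed 0-based: (i,j) with i < m, j < n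
  (paper row r corresponds to i = r - 1, column c to j = c - 1).
  An array is represented by its set F of filled cells.\<close>

definition cells :: "nat \<Rightarrow> nat \<Rightarrow> (nat \<times> nat) set" where
  "cells m n = {0..<m} \<times> {0..<n}"

definition sR :: "nat \<Rightarrow> nat \<Rightarrow> (nat \<times> nat) set \<Rightarrow> nat \<times> nat \<Rightarrow> nat \<times> nat" where
  "sR m n F c = (let (i, j) = c;
                     t = (LEAST t::nat. t \<ge> 1 \<and> (i, (j + t) mod n) \<in> F)
                 in (i, (j + t) mod n))"

definition sC :: "nat \<Rightarrow> nat \<Rightarrow> (nat \<times> nat) set \<Rightarrow> nat \<times> nat \<Rightarrow> nat \<times> nat" where
  "sC m n F c = (let (i, j) = c;
                     t = (LEAST t::nat. t \<ge> 1 \<and> ((i + t) mod m, j) \<in> F)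
                 in ((i + t) mod m, j))"

definition bishop :: "nat \<Rightarrow> nat \<Rightarrow> (nat \<times> nat) set \<Rightarrow> nat \<times> nat \<Rightarrow> nat \<times> nat" where
  "bishop m n F = sC m n F \<circ> sR m n F"

text \<open>A move function f is a solution to T(A): a permutation of F(A) forming a
  single cycle of length |F(A)|, i.e. every filled cell is reached from every
  other one by iterating f.\<close>
definition is_solution :: "(nat \<times> nat) set \<Rightarrow> (nat \<times> nat \<Rightarrow> nat \<times> nat) \<Rightarrow> bool" where
  "is_solution F f \<longleftrightarrow> bij_betw f F F \<and> (\<forall>x\<in>F. \<forall>y\<in>F. \<exists>k. (f ^^ k) x = y)"

end

theory Submission
  imports Defs "HOL-Number_Theory.Cong"
begin

text \<open>Both moves are cyclic successor maps along a line, so the bishop permutes the filled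
  cells of every array, and it suffices that every filled cell reaches the corner (0,0).
  Every orbit reaches row 0.  In the rows above the hole the bishop moves diagonally, and in
  the rows of the hole it moves diagonally within the columns [b, n) taken cyclically; hence
  an orbit leaving row 0 in column j returns to row 0 in column \<sigma>((j + m) mod n), where
  \<sigma> rotates the block of columns [0, a + b) by b and fixes all others.  As a + b = gcd m n,
  the rotation by m cycles each residue class of columns modulo a + b, and each class meets
  the block exactly once, where \<sigma> passes to the class shifted by b.  Since
  gcd b (a + b) = 1, these shifts run through all classes, so the return map is a single
  cycle.  Finally, the array with I2 = [n - b + 1, n] is a column rotation of the one with
  I2 = [1, b], and the bishop commutes with column rotations.\<close>

definition cyc_next :: "nat \<Rightarrow> nat set \<Rightarrow> nat \<Rightarrow> nat" where
  "cyc_next n S j = (j + (LEAST t. 1 \<le> t \<and> (j + t) mod n \<in> S)) mod n"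

lemma sR_cyc_next: "sR m n F (i, j) = (i, cyc_next n {j. (i, j) \<in> F} j)"
  by (simp add: sR_def cyc_next_def)

lemma sC_cyc_next: "sC m n F (i, j) = (cyc_next m {i. (i, j) \<in> F} i, j)"
  by (simp add: sC_def cyc_next_def)

lemma cyc_next_eqI:
  assumes "1 \<le> t" "(j + t) mod n \<in> S" "\<And>s. 1 \<le> s \<Longrightarrow> s < t \<Longrightarrow> (j + s) mod n \<notin> S"
  shows "cyc_next n S j = (j + t) mod n"
proof -
  have "(LEAST t. 1 \<le> t \<and> (j + t) mod n \<in> S) = t"
    by (rule Least_equality) (use assms not_less in blast)+
  then show ?thesis by (simp add: cyc_next_def)
qed

lemma cyc_nextE:
  assumes "S \<subseteq> {..<n}" "j \<in> S"
  obtains t where "1 \<le> t" "(j + t) mod n \<in> S" "\<And>s. 1 \<le> s \<Longrightarrow> s < t \<Longrightarrow> (j + s) mod n \<notin> S"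
    and "cyc_next n S j = (j + t) mod n"
proof -
  let ?t = "LEAST t. 1 \<le> t \<and> (j + t) mod n \<in> S"
  have "\<exists>t. 1 \<le> t \<and> (j + t) mod n \<in> S"
    using assms by (intro exI[of _ n]) auto
  then have "1 \<le> ?t \<and> (j + ?t) mod n \<in> S" by (rule LeastI_ex)
  moreover have "(j + s) mod n \<notin> S" if "1 \<le> s" "s < ?t" for s
    using not_less_Least[OF \<open>s < ?t\<close>] that by blast
  ultimately show thesis by (intro that) (auto simp: cyc_next_def)
qed

lemma cyc_next_mem: "S \<subseteq> {..<n} \<Longrightarrow> j \<in> S \<Longrightarrow> cyc_next n S j \<in> S"
  by (metis cyc_nextE)

lemma cyc_next_inj:
  assumes S: "S \<subseteq> {..<n}"
  shows "inj_on (cyc_next n S) S"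
proof -
  have same_target: "j = j'"
    if "j \<in> S" "j' \<in> S" "1 \<le> t" "t \<le> t'" "(j + t) mod n = (j' + t') mod n"
      and gap: "\<And>s. 1 \<le> s \<Longrightarrow> s < t' \<Longrightarrow> (j' + s) mod n \<notin> S" for j j' t t'
  proof (cases "t = t'")
    case True
    then have "[j = j'] (mod n)"
      using that(5) by (simp add: cong_add_rcancel_nat flip: cong_def)
    moreover have "j < n" "j' < n" using that(1,2) S by auto
    ultimately show ?thesis by (simp add: cong_def)
  next
    case False
    have "(j' + (t' - t) + t) mod n = (j + t) mod n" using that(4,5) by simp
    then have "[j' + (t' - t) = j] (mod n)"
      by (simp add: cong_add_rcancel_nat flip: cong_def)
    then have "(j' + (t' - t)) mod n = j"
      using that(1) S by (auto simp: cong_def)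
    moreover have "1 \<le> t' - t" "t' - t < t'" using False that(3,4) by auto
    ultimately show ?thesis using gap[of "t' - t"] that(1) by auto
  qed
  show ?thesis
  proof (rule inj_onI)
    fix j j' assume j: "j \<in> S" and j': "j' \<in> S" and eq: "cyc_next n S j = cyc_next n S j'"
    obtain t where "1 \<le> t" "cyc_next n S j = (j + t) mod n"
      and "\<And>s. 1 \<le> s \<Longrightarrow> s < t \<Longrightarrow> (j + s) mod n \<notin> S"
      using cyc_nextE[OF S j] by blast
    moreover obtain t' where "1 \<le> t'" "cyc_next n S j' = (j' + t') mod n"
      and "\<And>s. 1 \<le> s \<Longrightarrow> s < t' \<Longrightarrow> (j' + s) mod n \<notin> S"
      using cyc_nextE[OF S j'] by blast
    ultimately show "j = j'"
      using same_target[of j j' t t'] same_target[of j' j t' t] j j' eq by (cases "t \<le> t'") auto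
  qed
qed

lemma cyc_next_interval:
  assumes "hi \<le> n" "lo \<le> j" "j < hi"
  shows "cyc_next n {lo..<hi} j = (if j = hi - 1 then lo else j + 1)"
proof (cases "j = hi - 1")
  case True
  have "cyc_next n {lo..<hi} j = (j + (n + lo - j)) mod n"
  proof (rule cyc_next_eqI)
    fix s assume "1 \<le> s" "s < n + lo - j"
    then show "(j + s) mod n \<notin> {lo..<hi}"
      using assms True by (cases "j + s < n") (auto simp: le_mod_geq)
  qed (use assms in auto)
  then show ?thesis using True assms by simp
next
  case False
  then have "cyc_next n {lo..<hi} j = (j + 1) mod n"
    by (intro cyc_next_eqI) (use assms in auto)
  then show ?thesis using False assms by simp
qed

lemma add_mod_cancel_right:
  fixes j j' d :: nat
  shows "(j + d) mod n = (j' + d) mod n \<Longrightarrow> j < n \<Longrightarrow> j' < n \<Longrightarrow> j = j'"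
  by (metis cong_add_rcancel_nat cong_def mod_less)

lemma rotate_mem_iff:
  fixes x d :: nat
  assumes "S \<subseteq> {..<n}"
  shows "(x + d) mod n \<in> (\<lambda>j. (j + d) mod n) ` S \<longleftrightarrow> x mod n \<in> S"
proof
  assume "(x + d) mod n \<in> (\<lambda>j. (j + d) mod n) ` S"
  then obtain s where "s \<in> S" "[s + d = x + d] (mod n)" by (auto simp: cong_def)
  then have "s \<in> S" "s mod n = x mod n" by (simp_all add: cong_add_rcancel_nat flip: cong_def)
  then show "x mod n \<in> S" using assms by auto
next
  assume "x mod n \<in> S"
  then show "(x + d) mod n \<in> (\<lambda>j. (j + d) mod n) ` S"
    by (rule rev_image_eqI) (simp add: mod_add_left_eq)
qed

lemma cyc_next_rotate:
  assumes "S \<subseteq> {..<n}"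
  shows "cyc_next n ((\<lambda>j. (j + d) mod n) ` S) ((j + d) mod n) = (cyc_next n S j + d) mod n"
proof -
  have shift: "((j + d) mod n + t) mod n = (j + t + d) mod n" for t
  proof -
    have "((j + d) mod n + t) mod n = (j + d + t) mod n" by (rule mod_add_left_eq)
    then show ?thesis by (simp add: ac_simps)
  qed
  have "((j + d) mod n + t) mod n \<in> (\<lambda>j. (j + d) mod n) ` S \<longleftrightarrow> (j + t) mod n \<in> S" for t
    unfolding shift by (rule rotate_mem_iff[OF assms])
  then show ?thesis
    unfolding cyc_next_def shift by (simp add: mod_add_left_eq mod_add_right_eq ac_simps)
qed

lemma finite_cells: "finite (cells m n)"
  by (simp add: cells_def)

lemma sR_bij_betw:
  assumes "F \<subseteq> cells m n"
  shows "bij_betw (sR m n F) F F"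
proof -
  have row: "{j. (i, j) \<in> F} \<subseteq> {..<n}" for i
    using assms by (auto simp: cells_def)
  have "sR m n F ` F \<subseteq> F"
    using cyc_next_mem[OF row] by (auto simp: sR_cyc_next)
  moreover have "inj_on (sR m n F) F"
    using inj_onD[OF cyc_next_inj[OF row]] by (intro inj_onI) (auto simp: sR_cyc_next)
  moreover have "finite F"
    using assms finite_cells by (rule finite_subset)
  ultimately show ?thesis
    by (simp add: bij_betw_def endo_inj_surj)
qed

lemma sC_bij_betw:
  assumes "F \<subseteq> cells m n"
  shows "bij_betw (sC m n F) F F"
proof -
  have col: "{i. (i, j) \<in> F} \<subseteq> {..<m}" for j
    using assms by (auto simp: cells_def)
  have "sC m n F ` F \<subseteq> F"
    using cyc_next_mem[OF col] by (auto simp: sC_cyc_next)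
  moreover have "inj_on (sC m n F) F"
    using inj_onD[OF cyc_next_inj[OF col]] by (intro inj_onI) (auto simp: sC_cyc_next)
  moreover have "finite F"
    using assms finite_cells by (rule finite_subset)
  ultimately show ?thesis
    by (simp add: bij_betw_def endo_inj_surj)
qed

lemma bishop_bij_betw: "F \<subseteq> cells m n \<Longrightarrow> bij_betw (bishop m n F) F F"
  unfolding bishop_def by (blast intro: bij_betw_trans sR_bij_betw sC_bij_betw)

lemma bij_betw_funpow_periodic:
  assumes "finite F" "bij_betw f F F" "x \<in> F"
  obtains p where "0 < p" "(f ^^ p) x = x"
proof -
  have orbit: "(f ^^ k) x \<in> F" for k
    using bij_betw_funpow[OF assms(2)] assms(3) by (auto simp: bij_betw_def)
  have "\<not> inj_on (\<lambda>k. (f ^^ k) x) {..card F}"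
  proof
    assume "inj_on (\<lambda>k. (f ^^ k) x) {..card F}"
    then have "card {..card F} \<le> card F"
      using orbit assms(1) by (intro card_inj_on_le) auto
    then show False by simp
  qed
  then obtain i j where "i < j" "(f ^^ i) x = (f ^^ j) x"
    unfolding inj_on_def by (metis nat_neq_iff)
  then have "(f ^^ i) ((f ^^ (j - i)) x) = (f ^^ i) x"
    by (metis funpow_add le_add_diff_inverse less_imp_le o_apply)
  then have "(f ^^ (j - i)) x = x"
    using bij_betw_imp_inj_on[OF bij_betw_funpow[OF assms(2)]] orbit assms(3)
    by (auto dest: inj_onD)
  with \<open>i < j\<close> show thesis by (intro that) auto
qed

lemma is_solutionI:
  assumes "finite F" "bij_betw f F F" "x0 \<in> F" "\<And>x. x \<in> F \<Longrightarrow> \<exists>k. (f ^^ k) x = x0"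
  shows "is_solution F f"
  unfolding is_solution_def
proof (intro conjI assms(2) ballI)
  fix x y assume "x \<in> F" "y \<in> F"
  obtain k1 where k1: "(f ^^ k1) x = x0" using assms(4)[OF \<open>x \<in> F\<close>] by blast
  obtain k2 where k2: "(f ^^ k2) y = x0" using assms(4)[OF \<open>y \<in> F\<close>] by blast
  obtain p where "0 < p" "(f ^^ p) y = y"
    using bij_betw_funpow_periodic[OF assms(1,2) \<open>y \<in> F\<close>] .
  then have "((f ^^ p) ^^ k2) y = y" by (induction k2) auto
  then have "(f ^^ (p * k2)) y = y" by (simp add: funpow_mult)
  moreover have "p * k2 = (p * k2 - k2) + k2" using \<open>0 < p\<close> by simp
  ultimately have "(f ^^ (p * k2 - k2)) x0 = y"
    using k2 by (metis funpow_add o_apply)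
  with k1 have "(f ^^ (p * k2 - k2 + k1)) x = y" by (simp add: funpow_add)
  then show "\<exists>k. (f ^^ k) x = y" ..
qed

definition shift_cols :: "nat \<Rightarrow> nat \<Rightarrow> nat \<times> nat \<Rightarrow> nat \<times> nat" where
  "shift_cols n d = (\<lambda>(i, j). (i, (j + d) mod n))"

lemma shift_cols_row: "{j. (i, j) \<in> shift_cols n d ` F} = (\<lambda>j. (j + d) mod n) ` {j. (i, j) \<in> F}"
  by (force simp: shift_cols_def)

lemma shift_cols_col:
  assumes "F \<subseteq> cells m n" "j < n"
  shows "{i. (i, (j + d) mod n) \<in> shift_cols n d ` F} = {i. (i, j) \<in> F}"
proof -
  have row: "{j. (i, j) \<in> F} \<subseteq> {..<n}" for i
    using assms(1) by (auto simp: cells_def)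
  have "(i, (j + d) mod n) \<in> shift_cols n d ` F \<longleftrightarrow> (j + d) mod n \<in> (\<lambda>j. (j + d) mod n) ` {j. (i, j) \<in> F}" for i
    using shift_cols_row[of i n d F] by blast
  also have "\<dots> i \<longleftrightarrow> (i, j) \<in> F" for i
    using rotate_mem_iff[OF row, of j d] assms(2) by simp
  finally show ?thesis by blast
qed

lemma bishop_shift_cols:
  assumes F: "F \<subseteq> cells m n" and "0 < n"
  shows "bishop m n (shift_cols n d ` F) (shift_cols n d c) = shift_cols n d (bishop m n F c)"
proof -
  obtain i j where c: "c = (i, j)" by force
  define j' where "j' = cyc_next n {j. (i, j) \<in> F} j"
  have row: "{j. (i, j) \<in> F} \<subseteq> {..<n}"
    using F by (auto simp: cells_def)
  have "j' < n"
    using \<open>0 < n\<close> by (simp add: j'_def cyc_next_def)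
  have "bishop m n (shift_cols n d ` F) (shift_cols n d c)
      = sC m n (shift_cols n d ` F) (i, cyc_next n ((\<lambda>j. (j + d) mod n) ` {j. (i, j) \<in> F}) ((j + d) mod n))"
    by (simp add: bishop_def c shift_cols_def sR_cyc_next flip: shift_cols_row)
  also have "\<dots> = sC m n (shift_cols n d ` F) (i, (j' + d) mod n)"
    by (simp add: cyc_next_rotate[OF row] j'_def)
  also have "\<dots> = (cyc_next m {i. (i, j') \<in> F} i, (j' + d) mod n)"
    by (simp add: sC_cyc_next shift_cols_col[OF F \<open>j' < n\<close>])
  also have "\<dots> = shift_cols n d (bishop m n F c)"
    by (simp add: bishop_def c sR_cyc_next sC_cyc_next shift_cols_def j'_def)
  finally show ?thesis .
qed

lemma funpow_bishop_shift_cols: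
  assumes "F \<subseteq> cells m n" "0 < n"
  shows "(bishop m n (shift_cols n d ` F) ^^ k) (shift_cols n d c) = shift_cols n d ((bishop m n F ^^ k) c)"
  by (induction k) (simp_all add: bishop_shift_cols[OF assms])

lemma shift_cols_cells: "shift_cols n d ` cells m n \<subseteq> cells m n"
  by (auto simp: shift_cols_def cells_def)

lemma is_solution_shift_cols:
  assumes F: "F \<subseteq> cells m n" and "0 < n" and sol: "is_solution F (bishop m n F)"
  shows "is_solution (shift_cols n d ` F) (bishop m n (shift_cols n d ` F))"
  unfolding is_solution_def
proof (intro conjI ballI)
  show "bij_betw (bishop m n (shift_cols n d ` F)) (shift_cols n d ` F) (shift_cols n d ` F)"
    using F shift_cols_cells by (blast intro: bishop_bij_betw)
next
  fix u v assume "u \<in> shift_cols n d ` F" "v \<in> shift_cols n d ` F"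
  then obtain x y where "x \<in> F" "y \<in> F" "u = shift_cols n d x" "v = shift_cols n d y" by blast
  moreover obtain k where "(bishop m n F ^^ k) x = y"
    using sol \<open>x \<in> F\<close> \<open>y \<in> F\<close> by (auto simp: is_solution_def)
  ultimately show "\<exists>k. (bishop m n (shift_cols n d ` F) ^^ k) u = v"
    using funpow_bishop_shift_cols[OF F \<open>0 < n\<close>] by metis
qed

lemma shift_cols_corner:
  assumes "A \<subseteq> {..<m}" "b < n"
  shows "shift_cols n (n - b) ` (cells m n - A \<times> {0..<b}) = cells m n - A \<times> {n - b..<n}"
proof -
  have inj: "inj_on (shift_cols n (n - b)) (cells m n)"
    by (rule inj_onI) (auto simp: shift_cols_def cells_def dest: add_mod_cancel_right)
  have cells: "shift_cols n (n - b) ` cells m n = cells m n"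
    using endo_inj_surj[OF finite_cells shift_cols_cells inj] .
  have "shift_cols n (n - b) ` (A \<times> {0..<b}) = (\<lambda>i. i) ` A \<times> (\<lambda>j. (j + (n - b)) mod n) ` {0..<b}"
    unfolding shift_cols_def by (rule image_paired_Times)
  also have "(\<lambda>j. (j + (n - b)) mod n) ` {0..<b} = (\<lambda>j. j + (n - b)) ` {0..<b}"
    by (rule image_cong) (use assms(2) in auto)
  also have "\<dots> = {n - b..<n}"
    using assms(2) by (simp only: image_add_atLeastLessThan' add_0 le_add_diff_inverse less_imp_le)
  finally have corner: "shift_cols n (n - b) ` (A \<times> {0..<b}) = A \<times> {n - b..<n}"
    by simp
  have "A \<times> {0..<b} \<subseteq> cells m n"
    using assms by (auto simp: cells_def)
  then show ?thesis
    using inj_on_image_set_diff[OF inj Diff_subset] cells corner by simp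
qed

lemma exists_add_mult_mod_eq:
  fixes x y m n :: nat
  assumes x: "x < n" and y: "y < n" and "x mod gcd m n = y mod gcd m n"
  shows "\<exists>k. (x + k * m) mod n = y"
proof -
  have "(y + n) mod gcd m n = y mod gcd m n"
    by (metis gcd_dvd2 mod_add_self2 dvd_def mod_mult_self2 mult.commute)
  then have "gcd m n dvd y + n - x"
    using mod_eq_dvd_iff_nat[of x "y + n" "gcd m n"] assms by simp
  then obtain k where k: "[m * k = y + n - x] (mod n)"
    using cong_solve_dvd_nat by blast
  have "(x + k * m) mod n = (x + (m * k) mod n) mod n"
    by (simp add: mod_add_right_eq mult.commute)
  also have "\<dots> = (x + (y + n - x)) mod n"
    using k by (simp add: cong_def mod_add_right_eq)
  also have "\<dots> = y"
    using x y by simp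
  finally show ?thesis ..
qed

locale corner_hole =
  fixes m n a b :: nat
  assumes a_pos: "0 < a" and b_pos: "0 < b" and a_less: "a < m" and b_less: "b < n"
    and gcd_mn: "gcd m n = a + b" and coprime_ab: "gcd a b = 1"
begin

definition filled :: "(nat \<times> nat) set" where
  "filled = cells m n - {m - a..<m} \<times> {0..<b}"

abbreviation f :: "nat \<times> nat \<Rightarrow> nat \<times> nat" where
  "f \<equiv> bishop m n filled"

lemma mem_filled: "(i, j) \<in> filled \<longleftrightarrow> i < m \<and> j < n \<and> (i < m - a \<or> b \<le> j)"
  by (auto simp: filled_def cells_def)

lemma block_dvd_m: "a + b dvd m"
  by (metis gcd_mn gcd_dvd1)

lemma block_dvd_n: "a + b dvd n"
  by (metis gcd_mn gcd_dvd2)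

lemma block_le_n: "a + b \<le> n"
  using block_dvd_n b_less by (simp add: dvd_imp_le)

lemma filled_subset: "filled \<subseteq> cells m n"
  by (auto simp: filled_def)

lemma f_upper:
  assumes "i < m - a" "j < n"
  shows "f (i, j) = (if i = m - a - 1 \<and> (j + 1) mod n < b then 0 else i + 1, (j + 1) mod n)"
proof -
  have "{j. (i, j) \<in> filled} = {0..<n}"
    using assms by (auto simp: mem_filled)
  then have "sR m n filled (i, j) = (i, (j + 1) mod n)"
    using assms cyc_next_interval[of n n 0 j] by (simp add: sR_cyc_next)
  moreover have "sC m n filled (i, (j + 1) mod n)
      = (if i = m - a - 1 \<and> (j + 1) mod n < b then 0 else i + 1, (j + 1) mod n)"
  proof (cases "(j + 1) mod n < b")
    case True
    then have "{i. (i, (j + 1) mod n) \<in> filled} = {0..<m - a}"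
      using b_less by (auto simp: mem_filled)
    then show ?thesis
      using True assms cyc_next_interval[of "m - a" m 0 i] by (simp add: sC_cyc_next)
  next
    case False
    then have "{i. (i, (j + 1) mod n) \<in> filled} = {0..<m}"
      using b_less by (auto simp: mem_filled)
    then show ?thesis
      using False assms a_pos cyc_next_interval[of m m 0 i] by (simp add: sC_cyc_next)
  qed
  ultimately show ?thesis
    by (simp add: bishop_def)
qed

lemma f_lower:
  assumes "m - a \<le> i" "i < m" "b \<le> j" "j < n"
  shows "f (i, j) = ((i + 1) mod m, if j = n - 1 then b else j + 1)"
proof -
  have "{j. (i, j) \<in> filled} = {b..<n}"
    using assms by (auto simp: mem_filled)
  then have "sR m n filled (i, j) = (i, if j = n - 1 then b else j + 1)"
    using assms cyc_next_interval[of n n b j] by (simp add: sR_cyc_next)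
  moreover have "{i. (i, if j = n - 1 then b else j + 1) \<in> filled} = {0..<m}"
    using assms by (auto simp: mem_filled)
  ultimately show ?thesis
    using assms cyc_next_interval[of m m 0 i] by (simp add: bishop_def sC_cyc_next)
qed

lemma f_walk_upper: "j < n \<Longrightarrow> k < m - a \<Longrightarrow> (f ^^ k) (0, j) = (k, (j + k) mod n)"
proof (induction k)
  case (Suc k)
  then show ?case
    using f_upper[of k "(j + k) mod n"] b_less by (simp add: mod_Suc_eq)
qed simp

lemma f_walk_lower:
  assumes "b \<le> c" "c < n"
  shows "k \<le> a \<Longrightarrow> (f ^^ k) (m - a, c) = ((m - a + k) mod m, b + (c - b + k) mod (n - b))"
proof (induction k)
  case 0
  then show ?case using assms a_pos a_less by simp
next
  case (Suc k)
  define y where "y = (c - b + k) mod (n - b)"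
  have "y < n - b"
    using b_less by (simp add: y_def)
  have "(f ^^ k) (m - a, c) = (m - a + k, b + y)"
    using Suc a_less by (simp add: y_def)
  moreover have "f (m - a + k, b + y) = ((m - a + k + 1) mod m, if b + y = n - 1 then b else b + y + 1)"
    using Suc.prems \<open>y < n - b\<close> a_less by (intro f_lower) auto
  moreover have "(if b + y = n - 1 then b else b + y + 1) = b + (c - b + Suc k) mod (n - b)"
    using \<open>y < n - b\<close> by (auto simp: y_def mod_Suc)
  ultimately show ?case
    by simp
qed

text \<open>The column in which an orbit leaving row 0 from column j returns to row 0
  (\<open>f_return\<close>).\<close>

definition return_col :: "nat \<Rightarrow> nat" where
  "return_col j = (let u = (j + m) mod n in if u < a + b then (u + b) mod (a + b) else u)"

lemma return_col_eq:
  "return_col j = (let c = (j + m - a) mod n in if c < b then c else b + (c - b + a) mod (n - b))"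
proof -
  define c where "c = (j + m - a) mod n"
  have "c < n"
    using b_less by (simp add: c_def)
  have "(j + m) mod n = (j + m - a + a) mod n"
    using a_less by simp
  then have u: "(j + m) mod n = (c + a) mod n"
    by (simp add: c_def mod_add_left_eq)
  consider "c < b" | "b \<le> c" "c + a < n" | "n \<le> c + a"
    by linarith
  then show ?thesis
  proof cases
    case 1
    moreover have "(c + a + b) mod (a + b) = c"
      using 1 by (simp add: add.assoc)
    ultimately show ?thesis
      using u block_le_n by (simp add: return_col_def c_def[symmetric])
  next
    case 2
    then show ?thesis
      using u by (simp add: return_col_def c_def[symmetric])
  next
    case 3
    have "(c + a) mod n = c + a - n" "c + a - n + b < a + b"
      using 3 \<open>c < n\<close> block_le_n by (simp_all add: le_mod_geq)
    then have "return_col j = c + a - n + b"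
      using u by (simp add: return_col_def Let_def)
    moreover have "(c - b + a) mod (n - b) = c + a - n" "b \<le> c"
      using 3 \<open>c < n\<close> block_le_n by (simp_all add: le_mod_geq)
    ultimately show ?thesis
      by (simp add: c_def[symmetric])
  qed
qed

lemma f_return:
  assumes "j < n"
  shows "\<exists>k. (f ^^ k) (0, j) = (0, return_col j)"
proof -
  define c where "c = (j + m - a) mod n"
  have "(f ^^ (m - a)) (0, j) = f ((f ^^ (m - a - 1)) (0, j))"
    using a_less by (metis Suc_diff_Suc diff_Suc_1 funpow.simps(2) o_apply zero_less_diff)
  also have "\<dots> = (if c < b then 0 else m - a, c)"
    using f_walk_upper[OF \<open>j < n\<close>, of "m - a - 1"] f_upper[of "m - a - 1"] a_less b_less
    by (simp add: c_def mod_Suc_eq Suc_diff_Suc)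
  finally have top: "(f ^^ (m - a)) (0, j) = (if c < b then 0 else m - a, c)" .
  show ?thesis
  proof (cases "c < b")
    case True
    then show ?thesis
      using top by (auto simp: return_col_eq c_def[symmetric] Let_def)
  next
    case False
    have "c < n"
      using b_less by (simp add: c_def)
    have "(f ^^ (a + (m - a))) (0, j) = (f ^^ a) (m - a, c)"
      using top False by (simp add: funpow_add)
    also have "\<dots> = (0, return_col j)"
      using f_walk_lower[OF _ \<open>c < n\<close>, of a] False b_less a_less by (simp add: return_col_eq c_def[symmetric])
    finally show ?thesis ..
  qed
qed

lemma f_row_step:
  assumes "x \<in> filled"
  shows "fst (f x) = 0 \<or> fst (f x) = fst x + 1"
proof -
  obtain i j where x: "x = (i, j)" by force
  consider "i < m - a" "j < n" | "m - a \<le> i" "i < m" "b \<le> j" "j < n"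
    using assms by (force simp: x mem_filled)
  then show ?thesis
    by cases (auto simp: x f_upper f_lower mod_Suc)
qed

lemma f_reaches_top_row: "x \<in> filled \<Longrightarrow> \<exists>k j. (f ^^ k) x = (0, j)"
proof (induction "m - fst x" arbitrary: x rule: less_induct)
  case less
  show ?case
  proof (cases "fst (f x) = 0")
    case True
    then show ?thesis
      by (metis funpow_0 funpow_Suc_right o_apply prod.collapse)
  next
    case False
    have "f x \<in> filled"
      using less.prems bishop_bij_betw[OF filled_subset] by (auto simp: bij_betw_def)
    moreover have "fst x < m"
      using less.prems by (cases x) (simp add: mem_filled)
    then have "m - fst (f x) < m - fst x"
      using False f_row_step[OF less.prems] by auto
    ultimately obtain k j where "(f ^^ k) (f x) = (0, j)"
      using less.hyps by blast
    then have "(f ^^ Suc k) x = (0, j)"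
      by (simp only: funpow_Suc_right o_apply)
    then show ?thesis by blast
  qed
qed

definition class_size :: nat where
  "class_size = n div (a + b)"

lemma class_size_pos: "0 < class_size"
  using block_le_n a_pos by (simp add: class_size_def div_greater_zero_iff)

lemma class_size_mult_m: "class_size * m = n * (m div (a + b))"
  using block_dvd_m block_dvd_n by (auto simp: class_size_def elim!: dvdE)

text \<open>The rotation by m cycles each residue class modulo a + b with period \<open>class_size\<close>,
  and each class meets the block [0, a + b) only once.\<close>

lemma rotation_leaves_block:
  assumes "e < a + b" "0 < i" "i < class_size"
  shows "a + b \<le> (e + i * m) mod n"
proof (rule ccontr)
  assume below: "\<not> a + b \<le> (e + i * m) mod n"
  obtain M where M: "m = (a + b) * M"
    using block_dvd_m by (elim dvdE)
  obtain L where L: "n = (a + b) * L"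
    using block_dvd_n by (elim dvdE)
  have "class_size = L"
    unfolding class_size_def using a_pos by (simp add: L)
  have im: "i * m = (a + b) * (i * M)"
    by (simp add: M mult_ac)
  then have "(e + i * m) mod (a + b) = e mod (a + b)"
    by (simp only: mod_mult_self2)
  then have "(e + i * m) mod n mod (a + b) = e mod (a + b)"
    using block_dvd_n by (simp add: mod_mod_cancel)
  then have "[e + i * m = e + 0] (mod n)"
    using assms(1) below block_le_n by (simp add: cong_def)
  then have "n dvd i * m"
    by (simp only: cong_add_lcancel_nat cong_0_iff)
  then have "L dvd i * M"
    using a_pos by (simp add: L im)
  moreover have "coprime L M"
  proof -
    have "(a + b) * gcd M L = a + b"
      using gcd_mn by (simp add: M L gcd_mult_distrib_nat)
    then show ?thesis
      using a_pos by (simp add: coprime_iff_gcd_eq_1 gcd.commute)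
  qed
  ultimately have "L dvd i"
    by (simp add: coprime_dvd_mult_left_iff)
  then show False
    using assms(2,3) \<open>class_size = L\<close> by (auto dest: dvd_imp_le)
qed

lemma return_col_less: "return_col j < n"
proof -
  have "(u + b) mod (a + b) < n" for u
    using block_le_n a_pos by (meson add_pos_pos b_pos mod_less_divisor order_less_le_trans)
  then show ?thesis
    using b_less by (simp add: return_col_def Let_def)
qed

lemma return_col_pow_in_class:
  assumes "e < a + b"
  shows "i < class_size \<Longrightarrow> (return_col ^^ i) e = (e + i * m) mod n"
proof (induction i)
  case 0
  then show ?case using assms block_le_n by simp
next
  case (Suc i)
  have "((e + i * m) mod n + m) mod n = (e + Suc i * m) mod n"
    by (simp add: mod_add_left_eq mod_add_right_eq ac_simps)
  moreover have "a + b \<le> (e + Suc i * m) mod n"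
    using rotation_leaves_block[OF assms, of "Suc i"] Suc.prems by simp
  ultimately show ?case
    using Suc by (simp add: return_col_def Let_def)
qed

lemma return_col_pow_class_size:
  assumes "e < a + b"
  shows "(return_col ^^ class_size) e = (e + b) mod (a + b)"
proof -
  obtain k where k: "class_size = Suc k"
    using class_size_pos by (cases class_size) auto
  then have "(return_col ^^ class_size) e = return_col ((e + k * m) mod n)"
    using return_col_pow_in_class[OF assms, of k] by simp
  moreover have "((e + k * m) mod n + m) mod n = e"
  proof -
    have "e + k * m + m = e + n * (m div (a + b))"
      using class_size_mult_m k by simp
    then have "((e + k * m) mod n + m) mod n = (e + n * (m div (a + b))) mod n"
      by (simp only: mod_add_left_eq)
    then show ?thesis
      using assms block_le_n by simp
  qed
  ultimately show ?thesis
    using assms by (simp add: return_col_def Let_def)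
qed

lemma return_col_pow_mult:
  assumes "e < a + b"
  shows "(return_col ^^ (t * class_size)) e = (e + t * b) mod (a + b)"
proof (induction t)
  case (Suc t)
  have "(return_col ^^ (Suc t * class_size)) e = (return_col ^^ class_size) ((e + t * b) mod (a + b))"
    using Suc by (simp add: funpow_add)
  also have "\<dots> = (e + Suc t * b) mod (a + b)"
    using a_pos by (simp add: return_col_pow_class_size mod_add_left_eq mod_add_right_eq ac_simps)
  finally show ?case .
qed (use assms in simp)

lemma return_col_reaches_0:
  assumes "j < n"
  shows "\<exists>k. (return_col ^^ k) j = 0"
proof -
  define e where "e = j mod (a + b)"
  have "e < a + b"
    using a_pos by (simp add: e_def)
  then have "\<exists>i. (e + i * m) mod n = j"
    using exists_add_mult_mod_eq[of e n j m] assms block_le_n gcd_mn by (simp add: e_def)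
  then obtain i where "(e + i * m) mod n = j" ..
  moreover have "(e + i * m) mod n = (e + (i mod class_size) * m) mod n"
  proof -
    have "i = i mod class_size + i div class_size * class_size"
      by simp
    then have "i * m = (i mod class_size) * m + (i div class_size) * (class_size * m)"
      by (metis distrib_right mult.assoc)
    also have "\<dots> = (i mod class_size) * m + n * ((i div class_size) * (m div (a + b)))"
      unfolding class_size_mult_m by (simp add: mult_ac)
    finally show ?thesis
      by (simp only: add.assoc[symmetric] mod_mult_self2)
  qed
  ultimately have "(return_col ^^ (i mod class_size)) e = j"
    using return_col_pow_in_class[OF \<open>e < a + b\<close>] class_size_pos by simp
  moreover have "class_size - i mod class_size + i mod class_size = class_size"
    using class_size_pos by (simp add: le_add_diff_inverse2 less_imp_le)
  ultimately have "(return_col ^^ (class_size - i mod class_size)) j = (return_col ^^ class_size) e"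
    by (metis funpow_add o_apply)
  also have "\<dots> = (e + b) mod (a + b)"
    by (rule return_col_pow_class_size[OF \<open>e < a + b\<close>])
  finally have to_block: "(return_col ^^ (class_size - i mod class_size)) j = (e + b) mod (a + b)" .
  have "gcd b (a + b) = 1"
    using coprime_ab by (metis gcd.commute gcd_add1)
  then have "\<exists>t. ((e + b) mod (a + b) + t * b) mod (a + b) = 0"
    using a_pos by (intro exists_add_mult_mod_eq) auto
  then obtain t where "((e + b) mod (a + b) + t * b) mod (a + b) = 0" ..
  then have "(return_col ^^ (t * class_size)) ((e + b) mod (a + b)) = 0"
    using return_col_pow_mult a_pos by simp
  then have "(return_col ^^ (t * class_size + (class_size - i mod class_size))) j = 0"
    using to_block by (simp add: funpow_add)
  then show ?thesis ..
qed

lemma f_reaches_return_col_pow: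
  assumes "j < n"
  shows "\<exists>k. (f ^^ k) (0, j) = (0, (return_col ^^ t) j)"
proof (induction t)
  case 0
  have "(f ^^ 0) (0, j) = (0, (return_col ^^ 0) j)" by simp
  then show ?case ..
next
  case (Suc t)
  then obtain k where k: "(f ^^ k) (0, j) = (0, (return_col ^^ t) j)" ..
  have "(return_col ^^ t) j < n"
    using assms return_col_less by (cases t) simp_all
  then obtain k' where "(f ^^ k') (0, (return_col ^^ t) j) = (0, (return_col ^^ Suc t) j)"
    using f_return by auto
  with k have "(f ^^ (k' + k)) (0, j) = (0, (return_col ^^ Suc t) j)"
    by (simp add: funpow_add)
  then show ?case ..
qed

theorem is_solution_filled: "is_solution filled f"
proof (rule is_solutionI)
  show "finite filled"
    using filled_subset finite_cells by (rule finite_subset)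
  show bij: "bij_betw f filled filled"
    by (rule bishop_bij_betw[OF filled_subset])
  show "(0, 0) \<in> filled"
    using a_less b_less by (simp add: mem_filled)
  fix x assume "x \<in> filled"
  then obtain k j where k: "(f ^^ k) x = (0, j)"
    using f_reaches_top_row by blast
  have "(0, j) \<in> filled"
    using bij_betw_funpow[OF bij, of k] \<open>x \<in> filled\<close> k by (metis bij_betwE)
  then have "j < n"
    by (simp add: mem_filled)
  then obtain t where "(return_col ^^ t) j = 0"
    using return_col_reaches_0 by blast
  then obtain k' where "(f ^^ k') (0, j) = (0, 0)"
    using f_reaches_return_col_pow[OF \<open>j < n\<close>, of t] by auto
  with k have "(f ^^ (k' + k)) x = (0, 0)"
    by (simp add: funpow_add)
  then show "\<exists>k. (f ^^ k) x = (0, 0)" ..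
qed

end

theorem lemma4p12:
  fixes m n a b :: nat and I2 :: "nat set"
  assumes "0 < a" "0 < b" "a < m" "b < n"
    and "I2 = {0..<b} \<or> I2 = {n - b..<n}"
    and "gcd m n = a + b" and "gcd a b = 1"
  shows "is_solution (cells m n - {m - a..<m} \<times> I2) (bishop m n (cells m n - {m - a..<m} \<times> I2))"
proof -
  interpret corner_hole m n a b
    using assms by unfold_locales
  from assms(5) show ?thesis
  proof
    assume "I2 = {0..<b}"
    then show ?thesis
      using is_solution_filled by (simp add: filled_def)
  next
    assume "I2 = {n - b..<n}"
    have "shift_cols n (n - b) ` filled = cells m n - {m - a..<m} \<times> I2"
      unfolding filled_def \<open>I2 = {n - b..<n}\<close> using assms(4) by (intro shift_cols_corner) auto
    moreover have "0 < n"
      using assms(4) by simp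
    ultimately show ?thesis
      using is_solution_shift_cols[OF filled_subset _ is_solution_filled] by metis
  qed
qed

end
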